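(* Let $F$ be a cumulative distribution function on $[0,\infty)$ that has a density $f$ and a finite mean, and suppose $\mathsf{OPT\text{-}GFT}(F)>0$. Let $B,S$ be independent with common distribution $F$, and let $p\sim F$ be drawn independently of $(B,S)$. Then \[\mathbb{E}_{p\sim F}\big[\mathsf{GFT}(p,F)\big]=\tfrac12\,\mathsf{OPT\text{-}GFT}(F)\] exactly, for every such $F$.
   Context: Symmetric bilateral trade: the buyer's value $B$ and the seller's value $S$ are independent draws from the same distribution $F$. A fixed-price mechanism posts a price $p$; trade occurs iff $B\ge p> S$ (for continuous $F$ the tie-breaking convention is immaterial). Gains from trade of price $p$: $\mathsf{GFT}(p,F)=\mathbb{E}[(B-S)\mathbf 1_{B\ge p>S}]$. Optimal gains from trade: $\mathsf{OPT\text{-}GFT}(F)=\mathbb{E}[(B-S)\mathbf 1_{B>S}]$. *)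

theory Defs
  imports "HOL-Probability.Probability"
begin

definition GFT :: "real \<Rightarrow> real measure \<Rightarrow> real" where
  "GFT p D = (\<integral>z. (fst z - snd z) * (if p \<le> fst z \<and> snd z < p then 1 else 0) \<partial>(D \<Otimes>\<^sub>M D))"

definition OPT_GFT :: "real measure \<Rightarrow> real" where
  "OPT_GFT D = (\<integral>z. (fst z - snd z) * (if snd z < fst z then 1 else 0) \<partial>(D \<Otimes>\<^sub>M D))"

end

theory Submission imports Defs begin

text \<open>Let \<open>x, y, z\<close> be independent draws from an atomless distribution, with \<open>z\<close> playing the
  price. Splitting \<open>(x - y) 1{y < x}\<close> according to where \<open>z\<close> falls gives
  \<open>(x - y) [1{z \<le> y < x} + 1{y < z \<le> x} + 1{y < x < z}]\<close>, and the middle term equals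
  \<open>(x - z) 1{y < z \<le> x} + (z - y) 1{y < z \<le> x}\<close>. Relabelling the i.i.d. variables (and ignoring
  ties, which have probability zero) turns these two pieces into the outer two terms, so the
  expectation of \<open>(x - y) 1{y < x}\<close> is twice that of the middle term, i.e. of the gains from trade
  at the random price \<open>z\<close>. All integrands are nonnegative, so the computation is carried out with
  iterated nonnegative integrals, where Tonelli's theorem needs no integrability.\<close>

locale real_prob_space = prob_space D for D :: "real measure" +
  assumes sets_D: "sets D = sets borel"
begin

lemma space_D: "space D = UNIV"
  using sets_eq_imp_space_eq[OF sets_D] by simp

lemma pair_sigma_finite_D: "pair_sigma_finite D D"
  by (simp add: pair_sigma_finite_def sigma_finite_measure_axioms)

lemma sets_pair_D: "sets (D \<Otimes>\<^sub>M D) = sets (borel \<Otimes>\<^sub>M borel)"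
  by (rule sets_pair_measure_cong[OF sets_D sets_D])

definition measurable3 :: "(real \<Rightarrow> real \<Rightarrow> real \<Rightarrow> ennreal) \<Rightarrow> bool" where
  "measurable3 g \<longleftrightarrow>
     (\<lambda>w. g (fst (fst w)) (snd (fst w)) (snd w)) \<in> borel_measurable ((D \<Otimes>\<^sub>M D) \<Otimes>\<^sub>M D)"

definition nn_integral3 :: "(real \<Rightarrow> real \<Rightarrow> real \<Rightarrow> ennreal) \<Rightarrow> ennreal" where
  "nn_integral3 g = (\<integral>\<^sup>+x. \<integral>\<^sup>+y. \<integral>\<^sup>+z. g x y z \<partial>D \<partial>D \<partial>D)"

lemma measurable3I:
  assumes "(\<lambda>w. g (fst (fst w)) (snd (fst w)) (snd w))
             \<in> borel_measurable ((borel \<Otimes>\<^sub>M borel) \<Otimes>\<^sub>M borel)"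
  shows "measurable3 g"
  using assms unfolding measurable3_def
  by (simp add: measurable_cong_sets[OF sets_pair_measure_cong[OF sets_pair_D sets_D] refl])

lemma measurable3_inner:
  assumes "measurable3 g"
  shows "(\<lambda>z. g x y z) \<in> borel_measurable D"
  using measurable_compose_Pair1[of "(x, y)" "D \<Otimes>\<^sub>M D", OF _ assms[unfolded measurable3_def]]
  by (simp add: space_pair_measure space_D)

lemma measurable3_middle:
  assumes "measurable3 g"
  shows "(\<lambda>w. \<integral>\<^sup>+z. g (fst w) (snd w) z \<partial>D) \<in> borel_measurable (D \<Otimes>\<^sub>M D)"
  using borel_measurable_nn_integral_fst[OF assms[unfolded measurable3_def]] by simp

lemma measurable3_middle':
  assumes "measurable3 g"
  shows "(\<lambda>y. \<integral>\<^sup>+z. g x y z \<partial>D) \<in> borel_measurable D"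
  using measurable_compose_Pair1[OF _ measurable3_middle[OF assms], of x] by (simp add: space_D)

lemma measurable3_outer:
  assumes "measurable3 g"
  shows "(\<lambda>x. \<integral>\<^sup>+y. \<integral>\<^sup>+z. g x y z \<partial>D \<partial>D) \<in> borel_measurable D"
  using borel_measurable_nn_integral_fst[OF measurable3_middle[OF assms]] by simp

lemma measurable3_fix_first:
  assumes "measurable3 g"
  shows "(\<lambda>w. g x (fst w) (snd w)) \<in> borel_measurable (D \<Otimes>\<^sub>M D)"
proof -
  have "(\<lambda>w::real \<times> real. ((x, fst w), snd w)) \<in> measurable (D \<Otimes>\<^sub>M D) ((D \<Otimes>\<^sub>M D) \<Otimes>\<^sub>M D)"
    by (intro measurable_Pair) (simp_all add: space_D)
  from measurable_comp[OF this assms[unfolded measurable3_def]] show ?thesis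
    by (simp add: o_def)
qed

lemma nn_integral3_swap23:
  assumes "measurable3 g"
  shows "nn_integral3 g = nn_integral3 (\<lambda>x y z. g x z y)"
  unfolding nn_integral3_def
proof (rule nn_integral_cong)
  fix x
  show "(\<integral>\<^sup>+y. \<integral>\<^sup>+z. g x y z \<partial>D \<partial>D) = (\<integral>\<^sup>+y. \<integral>\<^sup>+z. g x z y \<partial>D \<partial>D)"
    using pair_sigma_finite.Fubini[OF pair_sigma_finite_D measurable3_fix_first[OF assms, of x]]
    by simp
qed

lemma nn_integral3_swap12:
  assumes "measurable3 g"
  shows "nn_integral3 g = nn_integral3 (\<lambda>x y z. g y x z)"
  using pair_sigma_finite.Fubini[OF pair_sigma_finite_D measurable3_middle[OF assms]]
  by (simp add: nn_integral3_def)

lemma nn_integral3_add: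
  assumes "measurable3 g" "measurable3 h"
  shows "nn_integral3 (\<lambda>x y z. g x y z + h x y z) = nn_integral3 g + nn_integral3 h"
proof -
  have "(\<integral>\<^sup>+y. \<integral>\<^sup>+z. g x y z + h x y z \<partial>D \<partial>D)
      = (\<integral>\<^sup>+y. \<integral>\<^sup>+z. g x y z \<partial>D \<partial>D) + (\<integral>\<^sup>+y. \<integral>\<^sup>+z. h x y z \<partial>D \<partial>D)" for x
    using assms
    by (simp add: nn_integral_add measurable3_inner measurable3_middle' cong: nn_integral_cong)
  then show ?thesis
    using assms by (simp add: nn_integral3_def nn_integral_add measurable3_outer)
qed

lemma nn_integral3_cong_AE:
  assumes "\<And>x y. AE z in D. g x y z = h x y z"
  shows "nn_integral3 g = nn_integral3 h"
  unfolding nn_integral3_def by (intro nn_integral_cong nn_integral_cong_AE assms)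

lemma nn_integral3_const_last:
  "nn_integral3 (\<lambda>x y z. k x y) = (\<integral>\<^sup>+x. \<integral>\<^sup>+y. k x y \<partial>D \<partial>D)"
  by (simp add: nn_integral3_def nn_integral_const emeasure_space_1)

definition GFT_nn :: "real \<Rightarrow> ennreal" where
  "GFT_nn p = (\<integral>\<^sup>+b. \<integral>\<^sup>+s. ennreal ((b - s) * (if p \<le> b \<and> s < p then 1 else 0)) \<partial>D \<partial>D)"

definition OPT_GFT_nn :: ennreal where
  "OPT_GFT_nn = (\<integral>\<^sup>+b. \<integral>\<^sup>+s. ennreal ((b - s) * (if s < b then 1 else 0)) \<partial>D \<partial>D)"

lemma nn_integral_pair_D:
  assumes "g \<in> borel_measurable (borel \<Otimes>\<^sub>M borel)"
  shows "(\<integral>\<^sup>+z. g z \<partial>(D \<Otimes>\<^sub>M D)) = (\<integral>\<^sup>+b. \<integral>\<^sup>+s. g (b, s) \<partial>D \<partial>D)"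
  using assms
  by (subst nn_integral_fst[symmetric]) (simp_all add: measurable_cong_sets[OF sets_pair_D refl])

lemma GFT_eq_GFT_nn: "GFT p D = enn2real (GFT_nn p)"
  unfolding GFT_def GFT_nn_def
  by (subst integral_eq_nn_integral)
     (simp_all add: measurable_cong_sets[OF sets_pair_D refl] nn_integral_pair_D)

lemma OPT_GFT_eq_OPT_GFT_nn: "OPT_GFT D = enn2real OPT_GFT_nn"
  unfolding OPT_GFT_def OPT_GFT_nn_def
  by (subst integral_eq_nn_integral)
     (simp_all add: measurable_cong_sets[OF sets_pair_D refl] nn_integral_pair_D)

lemma OPT_GFT_nn_finite:
  assumes "OPT_GFT D \<noteq> 0"
  shows "OPT_GFT_nn < \<infinity>"
  using assms OPT_GFT_eq_OPT_GFT_nn less_top by fastforce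

lemma GFT_nn_le_OPT_GFT_nn: "GFT_nn p \<le> OPT_GFT_nn"
  unfolding GFT_nn_def OPT_GFT_nn_def by (intro nn_integral_mono ennreal_leI) auto

lemma measurable_GFT_nn: "GFT_nn \<in> borel_measurable D"
proof -
  have "measurable3 (\<lambda>p b s. ennreal ((b - s) * (if p \<le> b \<and> s < p then 1 else 0)))"
    by (rule measurable3I) measurable
  from measurable3_outer[OF this] show ?thesis
    unfolding GFT_nn_def .
qed

lemma expected_GFT_eq_nn_integral:
  assumes "OPT_GFT_nn < \<infinity>"
  shows "(\<integral>p. GFT p D \<partial>D) = enn2real (\<integral>\<^sup>+p. GFT_nn p \<partial>D)"
proof -
  have "(\<integral>p. GFT p D \<partial>D) = enn2real (\<integral>\<^sup>+p. ennreal (enn2real (GFT_nn p)) \<partial>D)"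
    unfolding GFT_eq_GFT_nn by (rule integral_eq_nn_integral) (use measurable_GFT_nn in auto)
  also have "(\<integral>\<^sup>+p. ennreal (enn2real (GFT_nn p)) \<partial>D) = (\<integral>\<^sup>+p. GFT_nn p \<partial>D)"
    using le_less_trans[OF GFT_nn_le_OPT_GFT_nn assms]
    by (intro nn_integral_cong ennreal_enn2real) simp
  finally show ?thesis .
qed

lemma nn_integral_GFT_nn:
  "(\<integral>\<^sup>+p. GFT_nn p \<partial>D)
     = nn_integral3 (\<lambda>x y z. ennreal ((x - y) * (if z \<le> x \<and> y < z then 1 else 0)))"
proof -
  have "(\<integral>\<^sup>+p. GFT_nn p \<partial>D)
      = nn_integral3 (\<lambda>p x y. ennreal ((x - y) * (if p \<le> x \<and> y < p then 1 else 0)))"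
    by (simp add: GFT_nn_def nn_integral3_def)
  also have "\<dots> = nn_integral3 (\<lambda>x p y. ennreal ((x - y) * (if p \<le> x \<and> y < p then 1 else 0)))"
    by (rule nn_integral3_swap12) (rule measurable3I, measurable)
  also have "\<dots> = nn_integral3 (\<lambda>x y p. ennreal ((x - y) * (if p \<le> x \<and> y < p then 1 else 0)))"
    by (rule nn_integral3_swap23) (rule measurable3I, measurable)
  finally show ?thesis .
qed

end

locale atomless_real_prob_space = real_prob_space +
  assumes AE_neq: "\<And>a. AE z in D. z \<noteq> a"
begin

lemma nn_integral3_low_price:
  "nn_integral3 (\<lambda>x y z. ennreal ((x - y) * (if y < x \<and> z \<le> y then 1 else 0)))
     = nn_integral3 (\<lambda>x y z. ennreal ((x - z) * (if z \<le> x \<and> y < z then 1 else 0)))"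
proof -
  have "nn_integral3 (\<lambda>x y z. ennreal ((x - z) * (if z \<le> x \<and> y < z then 1 else 0)))
      = nn_integral3 (\<lambda>x y z. ennreal ((x - y) * (if y \<le> x \<and> z < y then 1 else 0)))"
    by (rule nn_integral3_swap23) (rule measurable3I, measurable)
  also have "\<dots> = nn_integral3 (\<lambda>x y z. ennreal ((x - y) * (if y < x \<and> z \<le> y then 1 else 0)))"
  proof (rule nn_integral3_cong_AE)
    show "AE z in D. ennreal ((x - y) * (if y \<le> x \<and> z < y then 1 else 0))
        = ennreal ((x - y) * (if y < x \<and> z \<le> y then 1 else 0))" for x y
      using AE_neq[of y] by eventually_elim auto
  qed
  finally show ?thesis ..
qed

lemma nn_integral3_high_price:
  "nn_integral3 (\<lambda>x y z. ennreal ((x - y) * (if y < x \<and> x < z then 1 else 0)))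
     = nn_integral3 (\<lambda>x y z. ennreal ((z - y) * (if z \<le> x \<and> y < z then 1 else 0)))"
proof -
  have "nn_integral3 (\<lambda>x y z. ennreal ((z - y) * (if z \<le> x \<and> y < z then 1 else 0)))
      = nn_integral3 (\<lambda>x y z. ennreal ((z - x) * (if z \<le> y \<and> x < z then 1 else 0)))"
    by (rule nn_integral3_swap12) (rule measurable3I, measurable)
  also have "\<dots> = nn_integral3 (\<lambda>x y z. ennreal ((y - x) * (if y \<le> z \<and> x < y then 1 else 0)))"
    by (rule nn_integral3_swap23) (rule measurable3I, measurable)
  also have "\<dots> = nn_integral3 (\<lambda>x y z. ennreal ((x - y) * (if x \<le> z \<and> y < x then 1 else 0)))"
    by (rule nn_integral3_swap12) (rule measurable3I, measurable)
  also have "\<dots> = nn_integral3 (\<lambda>x y z. ennreal ((x - y) * (if y < x \<and> x < z then 1 else 0)))"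
  proof (rule nn_integral3_cong_AE)
    show "AE z in D. ennreal ((x - y) * (if x \<le> z \<and> y < x then 1 else 0))
        = ennreal ((x - y) * (if y < x \<and> x < z then 1 else 0))" for x y
      using AE_neq[of x] by eventually_elim auto
  qed
  finally show ?thesis ..
qed

lemma OPT_GFT_nn_eq_twice_expected_GFT_nn: "OPT_GFT_nn = 2 * (\<integral>\<^sup>+p. GFT_nn p \<partial>D)"
proof -
  define low where "low x y z = ennreal ((x - y) * (if y < x \<and> z \<le> y then 1 else 0))" for x y z
  define mid where "mid x y z = ennreal ((x - y) * (if z \<le> x \<and> y < z then 1 else 0))" for x y z
  define high where "high x y z = ennreal ((x - y) * (if y < x \<and> x < z then 1 else 0))" for x y z
  define buyer where "buyer x y z = ennreal ((x - z) * (if z \<le> x \<and> y < z then 1 else 0))" for x y z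
  define seller where "seller x y z = ennreal ((z - y) * (if z \<le> x \<and> y < z then 1 else 0))" for x y z
  have [simp]: "measurable3 low" "measurable3 mid" "measurable3 high"
    "measurable3 buyer" "measurable3 seller" "measurable3 (\<lambda>x y z. low x y z + mid x y z)"
    unfolding low_def mid_def high_def buyer_def seller_def
    by (rule measurable3I, measurable)+
  have "OPT_GFT_nn = nn_integral3 (\<lambda>x y z. ennreal ((x - y) * (if y < x then 1 else 0)))"
    by (simp add: OPT_GFT_nn_def nn_integral3_const_last)
  also have "\<dots> = nn_integral3 (\<lambda>x y z. low x y z + mid x y z + high x y z)"
    unfolding low_def mid_def high_def
    by (intro nn_integral3_cong_AE AE_I2)
       (auto simp: ennreal_plus[symmetric] simp del: ennreal_plus)
  also have "\<dots> = nn_integral3 low + nn_integral3 mid + nn_integral3 high"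
    by (simp add: nn_integral3_add)
  also have "nn_integral3 mid = nn_integral3 buyer + nn_integral3 seller"
  proof -
    have "nn_integral3 mid = nn_integral3 (\<lambda>x y z. buyer x y z + seller x y z)"
      unfolding mid_def buyer_def seller_def
      by (intro nn_integral3_cong_AE AE_I2)
         (auto simp: ennreal_plus[symmetric] algebra_simps simp del: ennreal_plus)
    then show ?thesis by (simp add: nn_integral3_add)
  qed
  also have "nn_integral3 low = nn_integral3 buyer"
    unfolding low_def buyer_def by (rule nn_integral3_low_price)
  also have "nn_integral3 high = nn_integral3 seller"
    unfolding high_def seller_def by (rule nn_integral3_high_price)
  also have "nn_integral3 buyer + (nn_integral3 buyer + nn_integral3 seller) + nn_integral3 seller
      = 2 * nn_integral3 mid"
    using \<open>nn_integral3 mid = nn_integral3 buyer + nn_integral3 seller\<close>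
    by (simp add: mult_2 add_ac)
  finally show ?thesis
    unfolding mid_def nn_integral_GFT_nn .
qed

end

theorem theorem1:
  fixes f :: "real \<Rightarrow> real"
  assumes f_meas: "f \<in> borel_measurable borel"
    and f_nonneg: "\<And>x. 0 \<le> f x"
    and f_support: "\<And>x. x < 0 \<Longrightarrow> f x = 0"
    and f_prob: "(\<integral>\<^sup>+ x. ennreal (f x) \<partial>lborel) = 1"
    and finite_mean: "integrable (density lborel (\<lambda>x. ennreal (f x))) (\<lambda>x. x)"
    and opt_pos: "OPT_GFT (density lborel (\<lambda>x. ennreal (f x))) > 0"
  shows "(\<integral>p. GFT p (density lborel (\<lambda>x. ennreal (f x))) \<partial>(density lborel (\<lambda>x. ennreal (f x))))
         = OPT_GFT (density lborel (\<lambda>x. ennreal (f x))) / 2"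
proof -
  define D where "D = density lborel (\<lambda>x. ennreal (f x))"
  note [measurable] = f_meas
  have "prob_space D"
    by (rule prob_spaceI) (simp add: D_def emeasure_density f_prob)
  moreover have "sets D = sets borel"
    unfolding D_def by simp
  moreover have "AE z in D. z \<noteq> a" for a
    unfolding D_def by (subst AE_density) (auto intro: eventually_mono[OF AE_lborel_singleton])
  ultimately interpret atomless_real_prob_space D
    by (simp add: atomless_real_prob_space_def atomless_real_prob_space_axioms_def
        real_prob_space_def real_prob_space_axioms_def)
  txt \<open>Positivity of \<open>OPT_GFT\<close> is used only for integrability (a non-integrable function has
    Bochner integral 0).\<close>
  have "OPT_GFT_nn < \<infinity>"
    using opt_pos by (intro OPT_GFT_nn_finite) (simp add: D_def)
  then have "(\<integral>p. GFT p D \<partial>D) = OPT_GFT D / 2"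
    by (simp add: expected_GFT_eq_nn_integral OPT_GFT_nn_eq_twice_expected_GFT_nn
        OPT_GFT_eq_OPT_GFT_nn enn2real_mult)
  then show ?thesis
    unfolding D_def .
qed

end
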